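(* Let $m$ be a positive integer with at least two distinct prime divisors. Then the difference graph $\mathcal{D}(\mathbb{Z}_m)$ is empty (has no edges) if and only if $m=pq$ where $p$ and $q$ are two distinct primes.
   Context: For a finite group $G$ with identity $e$: the intersection power graph $\mathcal{G}_I(G)$ has vertex set $G$, two distinct non-identity vertices $x,y$ being adjacent iff $\langle x\rangle\cap\langle y\rangle\neq\{e\}$, and $e$ being adjacent to every other vertex. The power graph $\mathcal{P}(G)$ has vertex set $G$, two distinct vertices being adjacent iff one is a power of the other. The difference graph $\mathcal{D}(G)$ is the graph on vertex set $G$ with edge set $E(\mathcal{G}_I(G))\setminus E(\mathcal{P}(G))$, with all isolated vertices removed. $\mathbb{Z}_m$ is the cyclic group of order $m$. *)

theory Defs
  imports "HOL-Algebra.Algebra" "HOL-Computational_Algebra.Primes"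
begin

definition intersection_power_edges :: "('a, 'b) monoid_scheme \<Rightarrow> 'a set set" where
  "intersection_power_edges G =
     {{x, y} | x y. x \<in> carrier G \<and> y \<in> carrier G \<and> x \<noteq> y \<and>
        (x = \<one>\<^bsub>G\<^esub> \<or> y = \<one>\<^bsub>G\<^esub> \<or>
         generate G {x} \<inter> generate G {y} \<noteq> {\<one>\<^bsub>G\<^esub>})}"

definition power_graph_edges :: "('a, 'b) monoid_scheme \<Rightarrow> 'a set set" where
  "power_graph_edges G =
     {{x, y} | x y. x \<in> carrier G \<and> y \<in> carrier G \<and> x \<noteq> y \<and>
        ((\<exists>k::nat. y = x [^]\<^bsub>G\<^esub> k) \<or> (\<exists>k::nat. x = y [^]\<^bsub>G\<^esub> k))}"

text \<open>Edge set of the difference graph D(G) (removing isolated vertices does not change edges).\<close>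
definition difference_graph_edges :: "('a, 'b) monoid_scheme \<Rightarrow> 'a set set" where
  "difference_graph_edges G = intersection_power_edges G - power_graph_edges G"

end

theory Submission
  imports Defs
begin

text \<open>In \<open>\<int>\<^sub>m\<close> the cyclic subgroup generated by \<open>x\<close> consists of the multiples of
  \<open>gcd x m\<close>. Hence \<open>y\<close> is a power of \<open>x\<close> iff \<open>gcd x m\<close> divides \<open>y\<close>, and the subgroups
  generated by \<open>x\<close> and \<open>y\<close> meet nontrivially iff \<open>gcd x m\<close> and \<open>gcd y m\<close> have a common
  multiple strictly between \<open>0\<close> and \<open>m\<close>. For \<open>m = p q\<close> two divisors of \<open>m\<close> with such a
  common multiple are comparable under divisibility, so every edge of the intersection power
  graph is an edge of the power graph. Otherwise \<open>m\<close> has distinct prime divisors \<open>p\<close>, \<open>q\<close>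
  with \<open>p q < m\<close>; then \<open>p q\<close> lies in the subgroups generated by \<open>p\<close> and by \<open>q\<close>, but neither
  of \<open>p\<close>, \<open>q\<close> is a power of the other.\<close>

lemma divisors_of_prime_comparable:
  fixes a b q :: "'a :: factorial_semiring_gcd"
  assumes "Factorial_Ring.prime q" "a dvd q" "b dvd q"
  shows "a dvd b \<or> b dvd a"
proof -
  have "is_unit a \<or> q dvd a"
    using assms(1,2) prime_elem_imp_irreducible irreducible_altdef prime_def by blast
  then show ?thesis
    using assms(3) dvd_trans unit_imp_dvd by blast
qed

lemma dvd_prime_mult_cancel:
  fixes a p q :: "'a :: factorial_semiring_gcd"
  assumes "Factorial_Ring.prime p" "a dvd p * q" "\<not> p dvd a"
  shows "a dvd q"
  using assms coprime_dvd_mult_right_iff prime_imp_coprime coprime_commute by metis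

lemma common_divisors_of_prime_product_comparable:
  fixes a b z p q :: "'a :: factorial_semiring_gcd"
  assumes pq: "Factorial_Ring.prime p" "Factorial_Ring.prime q" "p \<noteq> q"
    and a: "a dvd p * q" "a dvd z" and b: "b dvd p * q" "b dvd z"
    and z: "\<not> p * q dvd z"
  shows "a dvd b \<or> b dvd a"
proof -
  have "\<not> p dvd z \<or> \<not> q dvd z"
    using z pq divides_mult primes_coprime by blast
  then show ?thesis
  proof
    assume "\<not> p dvd z"
    then have "a dvd q" "b dvd q"
      using a b pq(1) dvd_prime_mult_cancel dvd_trans by metis+
    then show ?thesis using pq(2) divisors_of_prime_comparable by blast
  next
    assume "\<not> q dvd z"
    then have "a dvd p" "b dvd p"
      using a b pq(2) dvd_prime_mult_cancel dvd_trans mult.commute by metis+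
    then show ?thesis using pq(1) divisors_of_prime_comparable by blast
  qed
qed

lemma (in group) nat_pow_iff_mem_generate:
  assumes "finite (carrier G)" "x \<in> carrier G"
  shows "(\<exists>k::nat. y = x [^] k) \<longleftrightarrow> y \<in> generate G {x}"
  using generate_pow_nat[OF assms(2)] ord_ge_1[OF assms] by auto

lemma generate_integer_mod_group:
  assumes "0 < m" "x \<in> carrier (integer_mod_group m)"
  shows "generate (integer_mod_group m) {x} = {y \<in> {0..<int m}. gcd x (int m) dvd y}"
proof -
  have "{k * x mod int m | k. True} = {y \<in> {0..<int m}. gcd x (int m) dvd y}"
  proof (intro subset_antisym subsetI)
    fix y assume "y \<in> {k * x mod int m | k. True}"
    then show "y \<in> {y \<in> {0..<int m}. gcd x (int m) dvd y}"
      using assms(1) by (auto simp: dvd_mod_iff)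
  next
    fix y assume y: "y \<in> {y \<in> {0..<int m}. gcd x (int m) dvd y}"
    obtain u v where "u * x + v * int m = gcd x (int m)" using bezout_int by blast
    moreover obtain t where "y = gcd x (int m) * t" using y by blast
    ultimately have "y = (t * (u * x + v * int m)) mod int m"
      using y by (simp add: mult.commute)
    also have "\<dots> = (t * u * x + t * v * int m) mod int m"
      by (simp add: algebra_simps)
    also have "\<dots> = (t * u) * x mod int m" by simp
    finally have "y = (t * u) * x mod int m" .
    then show "y \<in> {k * x mod int m | k. True}" by blast
  qed
  then show ?thesis
    using group.generate_pow[OF group_integer_mod_group assms(2)]
    by (simp add: int_pow_integer_mod_group)
qed

lemma integer_mod_group_nat_pow_iff:
  assumes "0 < m" "x \<in> carrier (integer_mod_group m)" "y \<in> carrier (integer_mod_group m)"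
  shows "(\<exists>k::nat. y = x [^]\<^bsub>integer_mod_group m\<^esub> k) \<longleftrightarrow> gcd x (int m) dvd y"
proof -
  have "finite (carrier (integer_mod_group m))"
    using assms(1) by (simp add: carrier_integer_mod_group)
  then have "(\<exists>k::nat. y = x [^]\<^bsub>integer_mod_group m\<^esub> k) \<longleftrightarrow> y \<in> generate (integer_mod_group m) {x}"
    using group.nat_pow_iff_mem_generate[OF group_integer_mod_group] assms(2) by blast
  also have "\<dots> \<longleftrightarrow> gcd x (int m) dvd y"
    using assms by (simp add: generate_integer_mod_group carrier_integer_mod_group)
  finally show ?thesis .
qed

lemma power_graph_edges_integer_mod_group:
  assumes "0 < m"
  shows "power_graph_edges (integer_mod_group m) =
    {{x, y} | x y. x \<in> {0..<int m} \<and> y \<in> {0..<int m} \<and> x \<noteq> y \<and>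
       (gcd x (int m) dvd y \<or> gcd y (int m) dvd x)}"
proof -
  have "(x \<in> carrier (integer_mod_group m) \<and> y \<in> carrier (integer_mod_group m) \<and> x \<noteq> y \<and>
      ((\<exists>k::nat. y = x [^]\<^bsub>integer_mod_group m\<^esub> k) \<or> (\<exists>k::nat. x = y [^]\<^bsub>integer_mod_group m\<^esub> k)))
    \<longleftrightarrow> (x \<in> {0..<int m} \<and> y \<in> {0..<int m} \<and> x \<noteq> y \<and>
      (gcd x (int m) dvd y \<or> gcd y (int m) dvd x))" for x y
    using integer_mod_group_nat_pow_iff[OF assms, of x y] integer_mod_group_nat_pow_iff[OF assms, of y x]
      assms carrier_integer_mod_group[of m] by auto
  then show ?thesis
    unfolding power_graph_edges_def by (simp only:)
qed

lemma integer_mod_group_generate_inter_nontrivial_iff: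
  assumes "0 < m" "x \<in> carrier (integer_mod_group m)" "y \<in> carrier (integer_mod_group m)"
  shows "generate (integer_mod_group m) {x} \<inter> generate (integer_mod_group m) {y} \<noteq> {0} \<longleftrightarrow>
    (\<exists>z. 0 < z \<and> z < int m \<and> gcd x (int m) dvd z \<and> gcd y (int m) dvd z)"
proof -
  let ?S = "generate (integer_mod_group m) {x} \<inter> generate (integer_mod_group m) {y}"
  have "0 \<in> ?S"
    using generate.one[of "integer_mod_group m"] by simp
  then have "?S \<noteq> {0} \<longleftrightarrow> (\<exists>z \<in> ?S. z \<noteq> 0)"
    by blast
  also have "\<dots> \<longleftrightarrow> (\<exists>z. 0 < z \<and> z < int m \<and> gcd x (int m) dvd z \<and> gcd y (int m) dvd z)"
    unfolding generate_integer_mod_group[OF assms(1,2)] generate_integer_mod_group[OF assms(1,3)] Bex_def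
    by (intro ex_cong1) auto
  finally show ?thesis .
qed

lemma intersection_power_edges_integer_mod_group:
  assumes "0 < m"
  shows "intersection_power_edges (integer_mod_group m) =
    {{x, y} | x y. x \<in> {0..<int m} \<and> y \<in> {0..<int m} \<and> x \<noteq> y \<and>
       (x = 0 \<or> y = 0 \<or>
        (\<exists>z. 0 < z \<and> z < int m \<and> gcd x (int m) dvd z \<and> gcd y (int m) dvd z))}"
proof -
  have "(x \<in> carrier (integer_mod_group m) \<and> y \<in> carrier (integer_mod_group m) \<and> x \<noteq> y \<and>
      (x = \<one>\<^bsub>integer_mod_group m\<^esub> \<or> y = \<one>\<^bsub>integer_mod_group m\<^esub> \<or>
       generate (integer_mod_group m) {x} \<inter> generate (integer_mod_group m) {y} \<noteq> {\<one>\<^bsub>integer_mod_group m\<^esub>}))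
    \<longleftrightarrow> (x \<in> {0..<int m} \<and> y \<in> {0..<int m} \<and> x \<noteq> y \<and>
      (x = 0 \<or> y = 0 \<or>
       (\<exists>z. 0 < z \<and> z < int m \<and> gcd x (int m) dvd z \<and> gcd y (int m) dvd z)))" for x y
    using integer_mod_group_generate_inter_nontrivial_iff[OF assms, of x y]
      assms carrier_integer_mod_group[of m] by auto
  then show ?thesis
    unfolding intersection_power_edges_def by (simp only:)
qed

lemma difference_graph_edges_integer_mod_group_prime_product:
  assumes "Factorial_Ring.prime p" "Factorial_Ring.prime q" "p \<noteq> q"
  shows "difference_graph_edges (integer_mod_group (p * q)) = {}"
proof -
  let ?m = "int p * int q"
  have m0: "0 < p * q"
    using prime_gt_0_nat[OF assms(1)] prime_gt_0_nat[OF assms(2)] by simp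
  have int_primes: "Factorial_Ring.prime (int p)" "Factorial_Ring.prime (int q)" "int p \<noteq> int q"
    using assms by simp_all
  have comparable: "gcd x ?m dvd y \<or> gcd y ?m dvd x"
    if "x = 0 \<or> y = 0 \<or> (\<exists>z. 0 < z \<and> z < ?m \<and> gcd x ?m dvd z \<and> gcd y ?m dvd z)" for x y
    using that
  proof (elim disjE exE conjE)
    fix z assume z: "0 < z" "z < ?m" "gcd x ?m dvd z" "gcd y ?m dvd z"
    then have "\<not> ?m dvd z"
      using zdvd_imp_le by fastforce
    then have "gcd x ?m dvd gcd y ?m \<or> gcd y ?m dvd gcd x ?m"
      using common_divisors_of_prime_product_comparable[OF int_primes gcd_dvd2 z(3) gcd_dvd2 z(4)]
      by blast
    then show ?thesis
      using gcd_dvd1 dvd_trans by blast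
  qed simp_all
  have "e \<in> power_graph_edges (integer_mod_group (p * q))"
    if edge: "e \<in> intersection_power_edges (integer_mod_group (p * q))" for e
  proof -
    obtain x y where e: "e = {x, y}" "x \<in> {0..<?m}" "y \<in> {0..<?m}" "x \<noteq> y"
      and common: "x = 0 \<or> y = 0 \<or> (\<exists>z. 0 < z \<and> z < ?m \<and> gcd x ?m dvd z \<and> gcd y ?m dvd z)"
      using edge unfolding intersection_power_edges_integer_mod_group[OF m0] of_nat_mult by auto
    have "gcd x ?m dvd y \<or> gcd y ?m dvd x"
      using common by (rule comparable)
    then show ?thesis
      unfolding power_graph_edges_integer_mod_group[OF m0] of_nat_mult
      using e by blast
  qed
  then show ?thesis
    unfolding difference_graph_edges_def by blast
qed

lemma prime_pair_mem_difference_graph_edges: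
  assumes "Factorial_Ring.prime p" "Factorial_Ring.prime q" "p \<noteq> q" "p * q dvd m" "p * q < m"
  shows "{int p, int q} \<in> difference_graph_edges (integer_mod_group m)"
proof -
  have m0: "0 < m"
    using assms(5) by simp
  have "1 < p" "1 < q"
    using assms(1,2) prime_gt_1_nat by blast+
  then have "p < p * q" "q < p * q"
    by simp_all
  then have "p < m" "q < m"
    using assms(5) by linarith+
  then have carrier: "int p \<in> {0..<int m}" "int q \<in> {0..<int m}"
    by simp_all
  have gcd: "gcd (int p) (int m) = int p" "gcd (int q) (int m) = int q"
    using assms(4) dvd_mult_left dvd_mult_right by (metis gcd_nat.absorb1 gcd_int_int_eq)+
  have "0 < int p * int q" "int p * int q < int m"
    using prime_gt_0_nat[OF assms(1)] prime_gt_0_nat[OF assms(2)] assms(5)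
    by (simp_all flip: of_nat_mult)
  then have "{int p, int q} \<in> intersection_power_edges (integer_mod_group m)"
    unfolding intersection_power_edges_integer_mod_group[OF m0] gcd
    using carrier assms(3) by (intro CollectI exI[of _ "int p"] exI[of _ "int q"]) auto
  moreover have "\<not> (int p dvd int q \<or> int q dvd int p)"
    using assms(1-3) primes_dvd_imp_eq by auto
  then have "{int p, int q} \<notin> power_graph_edges (integer_mod_group m)"
    unfolding power_graph_edges_integer_mod_group[OF m0]
    using gcd by (auto simp: doubleton_eq_iff)
  ultimately show ?thesis
    unfolding difference_graph_edges_def by blast
qed

theorem theorem4p3:
  fixes m :: nat
  assumes "m > 0" and "card (prime_factors m) \<ge> 2"
  shows "difference_graph_edges (integer_mod_group m) = {} \<longleftrightarrow>
         (\<exists>p q. Factorial_Ring.prime p \<and> Factorial_Ring.prime q \<and> p \<noteq> q \<and> m = p * q)"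
proof
  assume empty: "difference_graph_edges (integer_mod_group m) = {}"
  obtain p q where pq: "p \<in> prime_factors m" "q \<in> prime_factors m" "p \<noteq> q"
    using assms(2) card_le_Suc0_iff_eq[of "prime_factors m"] by force
  then have primes: "Factorial_Ring.prime p" "Factorial_Ring.prime q" and "p dvd m" "q dvd m"
    by auto
  then have "p * q dvd m"
    using pq(3) by (simp add: divides_mult primes_coprime)
  moreover have "\<not> p * q < m"
    using prime_pair_mem_difference_graph_edges[OF primes pq(3) \<open>p * q dvd m\<close>] empty by blast
  ultimately have "m = p * q"
    using assms(1) dvd_imp_le by (metis le_neq_implies_less)
  then show "\<exists>p q. Factorial_Ring.prime p \<and> Factorial_Ring.prime q \<and> p \<noteq> q \<and> m = p * q"
    using primes pq(3) by blast
next
  assume "\<exists>p q. Factorial_Ring.prime p \<and> Factorial_Ring.prime q \<and> p \<noteq> q \<and> m = p * q"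
  then show "difference_graph_edges (integer_mod_group m) = {}"
    using difference_graph_edges_integer_mod_group_prime_product by blast
qed

end
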